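(* Let $h,n\geq2$ and let $A_h$ be the alternating group. (i) If $h\leq n!$, then $O(A_h\times\{id\})=A_h\times\{id\}$. (ii) If $h>n!$, then $O(A_h\times\{id\})=S_h\times\{id\}$. (iii) $A_h\times\{id\}$ is an anonymity group with respect to $(h,n)$ if and only if $h\leq n!$.
   Context: Permutations compose as $(\sigma\tau)(x)=\sigma(\tau(x))$. Let $G=S_h\times S_n$ and $\mathcal{P}=(S_n)^h$ (preference profiles), with $G$ acting by $(p^{(\varphi,\psi)})_i=\psi\,p_{\varphi^{-1}(i)}$; $p^U=\{p^g:g\in U\}$. $U\leq G$ is regular if for every $p$, $\{g\in U:p^g=p\}\subseteq S_h\times\{id\}$. For regular $U$, $\mathcal{A}(U)$ is the set of regular $V\leq G$ with $V\geq U$ and $p^V\subseteq p^U$ for all $p$, and $O(U)=\langle\mathcal{A}(U)\rangle$. A social preference function (SPF) is any $F:\mathcal{P}\to S_n$; $G(F)=\{(\varphi,\psi)\in G: F(p^{(\varphi,\psi)})=\psi F(p)\ \forall p\}$ and $G_1(F)=G(F)\cap(S_h\times\{id\})$; $U\leq S_h\times\{id\}$ is an anonymity group with respect to $(h,n)$ if $U=G_1(F)$ for some SPF $F$. *)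

theory Defs
  imports "HOL-Combinatorics.Permutations"
begin

(* Voters are 0..<h, alternatives are 0..<n. Group elements are pairs (phi, psi). *)
type_synonym perm = "nat \<Rightarrow> nat"
type_synonym profile = "nat \<Rightarrow> perm"

definition Gh :: "nat \<Rightarrow> nat \<Rightarrow> (perm \<times> perm) set" where
  "Gh h n = {(\<phi>, \<psi>). \<phi> permutes {..<h} \<and> \<psi> permutes {..<n}}"

definition Sh_id :: "nat \<Rightarrow> (perm \<times> perm) set" where
  "Sh_id h = {(\<phi>, id) | \<phi>. \<phi> permutes {..<h}}"

definition Ah_id :: "nat \<Rightarrow> (perm \<times> perm) set" where
  "Ah_id h = {(\<phi>, id) | \<phi>. \<phi> permutes {..<h} \<and> evenperm \<phi>}"

definition gmult :: "perm \<times> perm \<Rightarrow> perm \<times> perm \<Rightarrow> perm \<times> perm" where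
  "gmult g k = (fst g \<circ> fst k, snd g \<circ> snd k)"

definition ginv :: "perm \<times> perm \<Rightarrow> perm \<times> perm" where
  "ginv g = (inv (fst g), inv (snd g))"

definition is_subgroup :: "nat \<Rightarrow> nat \<Rightarrow> (perm \<times> perm) set \<Rightarrow> bool" where
  "is_subgroup h n V \<longleftrightarrow> V \<subseteq> Gh h n \<and> (id, id) \<in> V \<and>
     (\<forall>g\<in>V. \<forall>k\<in>V. gmult g k \<in> V) \<and> (\<forall>g\<in>V. ginv g \<in> V)"

definition gen_subgroup :: "nat \<Rightarrow> nat \<Rightarrow> (perm \<times> perm) set \<Rightarrow> (perm \<times> perm) set" where
  "gen_subgroup h n X = \<Inter>{V. is_subgroup h n V \<and> X \<subseteq> V}"

definition profiles :: "nat \<Rightarrow> nat \<Rightarrow> profile set" where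
  "profiles h n = {p. (\<forall>i<h. p i permutes {..<n}) \<and> (\<forall>i\<ge>h. p i = id)}"

definition act :: "nat \<Rightarrow> profile \<Rightarrow> perm \<times> perm \<Rightarrow> profile" where
  "act h p g = (\<lambda>i. if i < h then snd g \<circ> p (inv (fst g) i) else id)"

definition orbit_U :: "nat \<Rightarrow> profile \<Rightarrow> (perm \<times> perm) set \<Rightarrow> profile set" where
  "orbit_U h p U = (\<lambda>g. act h p g) ` U"

definition regular :: "nat \<Rightarrow> nat \<Rightarrow> (perm \<times> perm) set \<Rightarrow> bool" where
  "regular h n U \<longleftrightarrow> is_subgroup h n U \<and>
     (\<forall>p\<in>profiles h n. {g\<in>U. act h p g = p} \<subseteq> Sh_id h)"

definition Aset :: "nat \<Rightarrow> nat \<Rightarrow> (perm \<times> perm) set \<Rightarrow> (perm \<times> perm) set set" where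
  "Aset h n U = {V. regular h n V \<and> U \<subseteq> V \<and>
      (\<forall>p\<in>profiles h n. orbit_U h p V \<subseteq> orbit_U h p U)}"

definition Ogrp :: "nat \<Rightarrow> nat \<Rightarrow> (perm \<times> perm) set \<Rightarrow> (perm \<times> perm) set" where
  "Ogrp h n U = gen_subgroup h n (\<Union>(Aset h n U))"

definition is_SPF :: "nat \<Rightarrow> nat \<Rightarrow> (profile \<Rightarrow> perm) \<Rightarrow> bool" where
  "is_SPF h n F \<longleftrightarrow> (\<forall>p\<in>profiles h n. F p permutes {..<n})"

definition GF :: "nat \<Rightarrow> nat \<Rightarrow> (profile \<Rightarrow> perm) \<Rightarrow> (perm \<times> perm) set" where
  "GF h n F = {g\<in>Gh h n. \<forall>p\<in>profiles h n. F (act h p g) = snd g \<circ> F p}"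

definition G1F :: "nat \<Rightarrow> nat \<Rightarrow> (profile \<Rightarrow> perm) \<Rightarrow> (perm \<times> perm) set" where
  "G1F h n F = GF h n F \<inter> Sh_id h"

definition anonymity_group :: "nat \<Rightarrow> nat \<Rightarrow> (perm \<times> perm) set \<Rightarrow> bool" where
  "anonymity_group h n U \<longleftrightarrow> U \<subseteq> Sh_id h \<and> is_subgroup h n U \<and>
     (\<exists>F. is_SPF h n F \<and> U = G1F h n F)"

end

theory Submission
  imports Defs
begin

(* An injective profile, i.e. one in which all h voters report different orders, exists iff
   h \<le> n!.  On an injective profile the voter permutations act freely, so for a group U of
   voter permutations the orbit condition defining A(U) forces V \<subseteq> U; hence O(A_h) = A_h.
   For the same reason every S_h-orbit of injective profiles splits into exactly two A_h-orbits,
   interchanged by odd permutations; the SPF which tests whether a profile lies in the A_h-orbit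
   of a chosen representative of its S_h-orbit therefore has voter-invariance group A_h.
   If h > n!, every profile has two voters with equal orders, and composing with the
   transposition of these voters makes every S_h-orbit a single A_h-orbit; hence
   O(A_h) = S_h.  Finally, any anonymity group U satisfies O(U) = U, so A_h is not an anonymity
   group in that case. *)

lemma permutes_lessThan_less: "\<phi> permutes {..<h} \<Longrightarrow> i < h \<Longrightarrow> \<phi> i < h"
  using permutes_in_image by fastforce

lemma permutes_lessThan_permutation: "\<phi> permutes {..<h::nat} \<Longrightarrow> permutation \<phi>"
  by (rule permutes_imp_permutation) simp_all

lemma mem_Gh_iff [simp]: "(\<phi>, \<psi>) \<in> Gh h n \<longleftrightarrow> \<phi> permutes {..<h} \<and> \<psi> permutes {..<n}"
  by (simp add: Gh_def)

lemma mem_Sh_id_iff [simp]: "(\<phi>, \<psi>) \<in> Sh_id h \<longleftrightarrow> \<phi> permutes {..<h} \<and> \<psi> = id"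
  by (auto simp: Sh_id_def)

lemma mem_Ah_id_iff [simp]: "(\<phi>, \<psi>) \<in> Ah_id h \<longleftrightarrow> \<phi> permutes {..<h} \<and> evenperm \<phi> \<and> \<psi> = id"
  by (auto simp: Ah_id_def)

lemma Ah_id_subset_Sh_id: "Ah_id h \<subseteq> Sh_id h"
  by (auto simp: Ah_id_def)

lemma Ah_id_neq_Sh_id: "2 \<le> h \<Longrightarrow> Ah_id h \<noteq> Sh_id h"
proof -
  assume "2 \<le> h"
  then have "(transpose 0 1, id) \<in> Sh_id h - Ah_id h"
    by (simp add: permutes_swap_id evenperm_swap)
  then show ?thesis by blast
qed

lemma is_subgroup_Sh_id: "is_subgroup h n (Sh_id h)"
  unfolding is_subgroup_def
  by (auto simp: Sh_id_def gmult_def ginv_def permutes_compose permutes_inv)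

lemma is_subgroup_Ah_id: "is_subgroup h n (Ah_id h)"
  unfolding is_subgroup_def
  by (auto simp: Ah_id_def gmult_def ginv_def permutes_compose permutes_inv
      evenperm_comp evenperm_inv permutes_lessThan_permutation)

lemma act_apply_voter [simp]: "i < h \<Longrightarrow> act h p (\<phi>, \<psi>) i = \<psi> \<circ> p (inv \<phi> i)"
  by (simp add: act_def)

lemma act_gmult:
  assumes "g \<in> Gh h n" "k \<in> Gh h n"
  shows "act h (act h p g) k = act h p (gmult k g)"
proof -
  obtain \<phi> \<psi> \<phi>' \<psi>' where g: "g = (\<phi>, \<psi>)" "\<phi> permutes {..<h}"
    and k: "k = (\<phi>', \<psi>')" "\<phi>' permutes {..<h}"
    using assms by (cases g, cases k) auto
  have "inv (\<phi>' \<circ> \<phi>) = inv \<phi> \<circ> inv \<phi>'"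
    using g(2) k(2) by (simp add: o_inv_distrib permutes_bij)
  then show ?thesis
    using permutes_lessThan_less[OF permutes_inv[OF k(2)]]
    by (simp add: g k act_def gmult_def fun_eq_iff)
qed

lemma act_id_id: "p \<in> profiles h n \<Longrightarrow> act h p (id, id) = p"
  by (auto simp: act_def profiles_def)

lemma ginv_mem_Gh: "g \<in> Gh h n \<Longrightarrow> ginv g \<in> Gh h n"
  by (auto simp: Gh_def ginv_def permutes_inv)

lemma act_ginv:
  assumes "p \<in> profiles h n" "g \<in> Gh h n"
  shows "act h (act h p g) (ginv g) = p"
proof -
  have "gmult (ginv g) g = (id, id)"
    using assms(2) by (auto simp: Gh_def ginv_def gmult_def permutes_inv_o)
  then show ?thesis
    using assms by (simp add: act_gmult ginv_mem_Gh act_id_id)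
qed

lemma orbit_U_subset_of_mem:
  assumes "is_subgroup h n U" "q \<in> orbit_U h p U"
  shows "orbit_U h q U \<subseteq> orbit_U h p U"
proof
  fix r assume "r \<in> orbit_U h q U"
  then obtain g k where "g \<in> U" "q = act h p g" "k \<in> U" "r = act h q k"
    using assms(2) by (auto simp: orbit_U_def)
  moreover have "U \<subseteq> Gh h n" "\<forall>g\<in>U. \<forall>k\<in>U. gmult g k \<in> U"
    using assms(1) by (auto simp: is_subgroup_def)
  ultimately have "r = act h p (gmult k g)" "gmult k g \<in> U"
    using act_gmult[of g h n k p] by auto
  then show "r \<in> orbit_U h p U"
    by (simp add: orbit_U_def)
qed

lemma mem_orbit_U_sym:
  assumes "is_subgroup h n U" "p \<in> profiles h n" "q \<in> orbit_U h p U"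
  shows "p \<in> orbit_U h q U"
proof -
  obtain g where g: "g \<in> U" "q = act h p g"
    using assms(3) by (auto simp: orbit_U_def)
  moreover have "U \<subseteq> Gh h n" "\<forall>g\<in>U. ginv g \<in> U"
    using assms(1) by (auto simp: is_subgroup_def)
  ultimately have "p = act h q (ginv g)" "ginv g \<in> U"
    using act_ginv[OF assms(2), of g] by auto
  then show ?thesis
    unfolding orbit_U_def by (rule image_eqI)
qed

lemma orbit_U_eq_of_mem:
  assumes "is_subgroup h n U" "p \<in> profiles h n" "q \<in> orbit_U h p U"
  shows "orbit_U h q U = orbit_U h p U"
  using orbit_U_subset_of_mem[OF assms(1,3)]
    orbit_U_subset_of_mem[OF assms(1) mem_orbit_U_sym[OF assms]]
  by (rule subset_antisym)

lemma mem_orbit_U_self: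
  assumes "is_subgroup h n U" "p \<in> profiles h n"
  shows "p \<in> orbit_U h p U"
proof -
  have "(id, id) \<in> U" using assms(1) by (simp add: is_subgroup_def)
  then show ?thesis using act_id_id[OF assms(2)] by (force simp: orbit_U_def)
qed

lemma act_voters_inj:
  assumes "inj_on p {..<h}" "\<phi> permutes {..<h}" "\<alpha> permutes {..<h}"
    and "act h p (\<phi>, id) = act h p (\<alpha>, id)"
  shows "\<phi> = \<alpha>"
proof -
  have "inv \<phi> i = inv \<alpha> i" for i
  proof (cases "i < h")
    case True
    then have "p (inv \<phi> i) = p (inv \<alpha> i)"
      using assms(4) by (metis act_apply_voter id_comp)
    moreover have "inv \<phi> i < h" "inv \<alpha> i < h"
      using True assms(2,3) by (simp_all add: permutes_lessThan_less permutes_inv)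
    ultimately show ?thesis
      using assms(1) by (simp add: inj_on_def)
  next
    case False
    then show ?thesis
      using permutes_not_in[OF permutes_inv[OF assms(2)]]
        permutes_not_in[OF permutes_inv[OF assms(3)]]
      by simp
  qed
  then have "inv \<phi> = inv \<alpha>" ..
  then show ?thesis
    by (metis permutes_inv_inv assms(2,3))
qed

lemma ex_inj_profile_iff: "(\<exists>p\<in>profiles h n. inj_on p {..<h}) \<longleftrightarrow> h \<le> fact n"
proof -
  let ?S = "{\<psi>. \<psi> permutes {..<n}}"
  have S: "finite ?S" "card ?S = fact n"
    by (simp_all add: finite_permutations card_permutations)
  show ?thesis
  proof
    assume "\<exists>p\<in>profiles h n. inj_on p {..<h}"
    then obtain p where "p ` {..<h} \<subseteq> ?S" "inj_on p {..<h}"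
      by (auto simp: profiles_def)
    then have "card {..<h} \<le> card ?S"
      by (intro card_inj_on_le S(1))
    then show "h \<le> fact n"
      using S(2) by simp
  next
    assume "h \<le> fact n"
    then have "card {..<h} \<le> card ?S"
      using S(2) by simp
    then obtain f where f: "f ` {..<h} \<subseteq> ?S" "inj_on f {..<h}"
      using card_le_inj[OF _ S(1)] by blast
    define p where "p i = (if i < h then f i else id)" for i
    have "p \<in> profiles h n" using f(1) by (auto simp: p_def profiles_def)
    moreover have "inj_on p {..<h}" using f(2) by (simp add: p_def inj_on_def)
    ultimately show "\<exists>p\<in>profiles h n. inj_on p {..<h}" by blast
  qed
qed

lemma act_voters_eq_even:
  assumes "\<not> inj_on p {..<h}" "\<phi> permutes {..<h}"
  obtains \<alpha> where "\<alpha> permutes {..<h}" "evenperm \<alpha>" "act h p (\<phi>, id) = act h p (\<alpha>, id)"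
proof (cases "evenperm \<phi>")
  case True
  then show ?thesis using that assms(2) by blast
next
  case False
  obtain i j where ij: "i < h" "j < h" "i \<noteq> j" "p i = p j"
    using assms(1) by (auto simp: inj_on_def)
  define \<tau> where "\<tau> = transpose i j"
  have \<tau>: "\<tau> permutes {..<h}" "\<not> evenperm \<tau>" "inv \<tau> = \<tau>" "p \<circ> \<tau> = p"
    using ij by (auto simp: \<tau>_def permutes_swap_id evenperm_swap fun_eq_iff transpose_def)
  have "\<phi> \<circ> \<tau> permutes {..<h}"
    using \<tau>(1) assms(2) by (rule permutes_compose)
  moreover have "evenperm (\<phi> \<circ> \<tau>)"
    using False \<tau>(1,2) assms(2) by (simp add: evenperm_comp permutes_lessThan_permutation)
  moreover have "act h p (\<phi>, id) = act h p (\<phi> \<circ> \<tau>, id)"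
  proof -
    have "inv (\<phi> \<circ> \<tau>) = \<tau> \<circ> inv \<phi>"
      using assms(2) \<tau>(1,3) by (simp add: o_inv_distrib permutes_bij)
    then show ?thesis
      using \<tau>(4) by (simp add: act_def fun_eq_iff)
  qed
  ultimately show ?thesis using that by blast
qed

lemma orbit_Sh_id_eq_orbit_Ah_id:
  assumes "\<not> inj_on p {..<h}"
  shows "orbit_U h p (Sh_id h) = orbit_U h p (Ah_id h)"
proof
  show "orbit_U h p (Sh_id h) \<subseteq> orbit_U h p (Ah_id h)"
  proof
    fix q assume "q \<in> orbit_U h p (Sh_id h)"
    then obtain \<phi> where "\<phi> permutes {..<h}" "q = act h p (\<phi>, id)"
      by (auto simp: orbit_U_def Sh_id_def)
    then obtain \<alpha> where "(\<alpha>, id) \<in> Ah_id h" "q = act h p (\<alpha>, id)"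
      using act_voters_eq_even[OF assms] by (metis mem_Ah_id_iff)
    then show "q \<in> orbit_U h p (Ah_id h)"
      unfolding orbit_U_def by (rule rev_image_eqI)
  qed
  show "orbit_U h p (Ah_id h) \<subseteq> orbit_U h p (Sh_id h)"
    using Ah_id_subset_Sh_id by (auto simp: orbit_U_def)
qed

lemma regular_if_subset_Sh_id: "is_subgroup h n U \<Longrightarrow> U \<subseteq> Sh_id h \<Longrightarrow> regular h n U"
  by (auto simp: regular_def)

lemma mem_Aset_self: "regular h n U \<Longrightarrow> U \<in> Aset h n U"
  by (simp add: Aset_def)

lemma Ogrp_eqI:
  assumes "W \<in> Aset h n U" "\<And>V. V \<in> Aset h n U \<Longrightarrow> V \<subseteq> W"
  shows "Ogrp h n U = W"
proof -
  have "\<Union>(Aset h n U) = W" using assms by blast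
  moreover have "is_subgroup h n W" using assms(1) by (simp add: Aset_def regular_def)
  ultimately show ?thesis by (auto simp: Ogrp_def gen_subgroup_def)
qed

lemma act_mem_orbit_U_if_mem_Aset:
  assumes "V \<in> Aset h n U" "g \<in> V" "p \<in> profiles h n"
  shows "act h p g \<in> orbit_U h p U"
proof -
  have "act h p g \<in> orbit_U h p V"
    unfolding orbit_U_def using assms(2) by (rule imageI)
  then show ?thesis
    using assms(1,3) by (auto simp: Aset_def)
qed

lemma Aset_subset_Sh_id:
  assumes "0 < h" "U \<subseteq> Sh_id h" "V \<in> Aset h n U"
  shows "V \<subseteq> Sh_id h"
proof
  fix g assume "g \<in> V"
  obtain \<phi> \<psi> where g: "g = (\<phi>, \<psi>)" by fastforce
  \<comment> \<open>The constant profile is fixed by all voter permutations, so only its alternative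
    component can move it.\<close>
  define c :: profile where "c = (\<lambda>i. id)"
  have "V \<subseteq> Gh h n" "c \<in> profiles h n"
    using assms(3) by (auto simp: Aset_def regular_def is_subgroup_def c_def profiles_def)
  then have \<phi>: "\<phi> permutes {..<h}"
    using \<open>g \<in> V\<close> g by auto
  have "act h c g \<in> orbit_U h c U"
    using act_mem_orbit_U_if_mem_Aset assms(3) \<open>g \<in> V\<close> \<open>c \<in> profiles h n\<close> .
  then obtain u where "u \<in> U" "act h c g = act h c u"
    by (auto simp: orbit_U_def)
  moreover have "act h c u 0 = id"
    using \<open>u \<in> U\<close> assms(1,2) by (auto simp: c_def Sh_id_def)
  moreover have "act h c g 0 = \<psi>"
    using assms(1) by (simp add: g c_def)
  ultimately have "\<psi> = id"
    by simp
  then show "g \<in> Sh_id h" using g \<phi> by simp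
qed

lemma Aset_subset_if_inj_profile:
  assumes "0 < h" "U \<subseteq> Sh_id h" "p \<in> profiles h n" "inj_on p {..<h}" "V \<in> Aset h n U"
  shows "V \<subseteq> U"
proof
  fix g assume "g \<in> V"
  then obtain \<phi> where g: "g = (\<phi>, id)" "\<phi> permutes {..<h}"
    using Aset_subset_Sh_id[OF assms(1,2,5)] by (auto simp: Sh_id_def)
  have "act h p g \<in> orbit_U h p U"
    using act_mem_orbit_U_if_mem_Aset assms(5) \<open>g \<in> V\<close> assms(3) .
  then obtain \<alpha> where "(\<alpha>, id) \<in> U" "\<alpha> permutes {..<h}" "act h p g = act h p (\<alpha>, id)"
    using assms(2) by (auto simp: orbit_U_def Sh_id_def)
  then show "g \<in> U"
    using act_voters_inj[OF assms(4) g(2)] g(1) by simp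
qed

lemma Ogrp_eq_self_if_le_fact:
  assumes "0 < h" "h \<le> fact n" "is_subgroup h n U" "U \<subseteq> Sh_id h"
  shows "Ogrp h n U = U"
proof (rule Ogrp_eqI)
  show "U \<in> Aset h n U"
    using assms(3,4) by (intro mem_Aset_self regular_if_subset_Sh_id)
  obtain p where p: "p \<in> profiles h n" "inj_on p {..<h}"
    using ex_inj_profile_iff assms(2) by blast
  show "V \<subseteq> U" if "V \<in> Aset h n U" for V
    using Aset_subset_if_inj_profile[OF assms(1,4) p that] .
qed

lemma Ogrp_Ah_id_if_gt_fact:
  assumes "0 < h" "fact n < h"
  shows "Ogrp h n (Ah_id h) = Sh_id h"
proof (rule Ogrp_eqI)
  have "orbit_U h p (Sh_id h) = orbit_U h p (Ah_id h)" if "p \<in> profiles h n" for p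
    using ex_inj_profile_iff[of h n] assms(2) that by (intro orbit_Sh_id_eq_orbit_Ah_id) auto
  then show "Sh_id h \<in> Aset h n (Ah_id h)"
    unfolding Aset_def
    using Ah_id_subset_Sh_id regular_if_subset_Sh_id[OF is_subgroup_Sh_id] by auto
  show "V \<subseteq> Sh_id h" if "V \<in> Aset h n (Ah_id h)" for V
    using Aset_subset_Sh_id[OF assms(1) Ah_id_subset_Sh_id that] .
qed

lemma mem_G1F_if_act_mem_orbit_U:
  assumes "g \<in> Sh_id h" "\<forall>p\<in>profiles h n. act h p g \<in> orbit_U h p (G1F h n F)"
  shows "g \<in> G1F h n F"
proof -
  have "F (act h p g) = snd g \<circ> F p" if p: "p \<in> profiles h n" for p
  proof -
    obtain u where u: "u \<in> GF h n F" "u \<in> Sh_id h" "act h p g = act h p u"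
      using assms(2) p unfolding orbit_U_def G1F_def by blast
    have "F (act h p u) = snd u \<circ> F p"
      using u(1) p unfolding GF_def by blast
    moreover have "snd u = snd g"
      using u(2) assms(1) unfolding Sh_id_def by force
    ultimately show ?thesis
      using u(3) by simp
  qed
  moreover have "g \<in> Gh h n" using assms(1) by (auto simp: Sh_id_def)
  ultimately show ?thesis using assms(1) unfolding G1F_def GF_def by blast
qed

lemma Ogrp_anonymity_group:
  assumes "0 < h" "anonymity_group h n U"
  shows "Ogrp h n U = U"
proof (rule Ogrp_eqI)
  obtain F where U: "U \<subseteq> Sh_id h" "is_subgroup h n U" "U = G1F h n F"
    using assms(2) unfolding anonymity_group_def by blast
  then show "U \<in> Aset h n U"
    by (intro mem_Aset_self regular_if_subset_Sh_id)
  show "V \<subseteq> U" if V: "V \<in> Aset h n U" for V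
  proof
    fix g assume "g \<in> V"
    then have "\<forall>p\<in>profiles h n. act h p g \<in> orbit_U h p (G1F h n F)"
      using act_mem_orbit_U_if_mem_Aset[OF V] U(3) by blast
    moreover have "g \<in> Sh_id h"
      using Aset_subset_Sh_id[OF assms(1) U(1) V] \<open>g \<in> V\<close> ..
    ultimately show "g \<in> U"
      using mem_G1F_if_act_mem_orbit_U U(3) by blast
  qed
qed

definition orbit_repr :: "nat \<Rightarrow> (perm \<times> perm) set \<Rightarrow> profile \<Rightarrow> profile" where
  "orbit_repr h U p = (SOME q. q \<in> orbit_U h p U)"

lemma orbit_repr_mem:
  assumes "is_subgroup h n U" "p \<in> profiles h n"
  shows "orbit_repr h U p \<in> orbit_U h p U"
  unfolding orbit_repr_def using mem_orbit_U_self[OF assms]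
  by (rule someI[where P = "\<lambda>q. q \<in> orbit_U h p U"])

lemma orbit_repr_eq:
  assumes "is_subgroup h n U" "p \<in> profiles h n" "q \<in> orbit_U h p U"
  shows "orbit_repr h U q = orbit_repr h U p"
  unfolding orbit_repr_def using orbit_U_eq_of_mem[OF assms] by simp

definition parity_SPF :: "nat \<Rightarrow> profile \<Rightarrow> perm" where
  "parity_SPF h p =
     (if p \<in> orbit_U h (orbit_repr h (Sh_id h) p) (Ah_id h) then id else transpose 0 1)"

lemma mem_orbit_U_Ah_id_iff:
  "q' \<in> orbit_U h q (Ah_id h) \<longleftrightarrow> (\<exists>\<beta>. \<beta> permutes {..<h} \<and> evenperm \<beta> \<and> q' = act h q (\<beta>, id))"
  unfolding orbit_U_def Ah_id_def by blast

lemma act_mem_orbit_Ah_id_iff: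
  assumes "inj_on p {..<h}" "\<phi> permutes {..<h}" "\<alpha> permutes {..<h}"
  shows "act h p (\<phi>, id) \<in> orbit_U h (act h p (\<alpha>, id)) (Ah_id h) \<longleftrightarrow> (evenperm \<phi> \<longleftrightarrow> evenperm \<alpha>)"
proof -
  have act_comp: "act h (act h p (\<alpha>, id)) (\<beta>, id) = act h p (\<beta> \<circ> \<alpha>, id)"
    if "\<beta> permutes {..<h}" for \<beta>
    using act_gmult[of "(\<alpha>, id)" h 0 "(\<beta>, id)" p] that assms(3) by (simp add: gmult_def)
  have "act h p (\<phi>, id) \<in> orbit_U h (act h p (\<alpha>, id)) (Ah_id h) \<longleftrightarrow>
      (\<exists>\<beta>. \<beta> permutes {..<h} \<and> evenperm \<beta> \<and> act h p (\<phi>, id) = act h p (\<beta> \<circ> \<alpha>, id))"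
    unfolding mem_orbit_U_Ah_id_iff by (simp add: act_comp cong: conj_cong)
  also have "\<dots> \<longleftrightarrow> (\<exists>\<beta>. \<beta> permutes {..<h} \<and> evenperm \<beta> \<and> \<phi> = \<beta> \<circ> \<alpha>)"
    using act_voters_inj[OF assms(1,2)] assms(3) permutes_compose by blast
  also have "\<dots> \<longleftrightarrow> (evenperm \<phi> \<longleftrightarrow> evenperm \<alpha>)"
  proof
    assume "\<exists>\<beta>. \<beta> permutes {..<h} \<and> evenperm \<beta> \<and> \<phi> = \<beta> \<circ> \<alpha>"
    then show "evenperm \<phi> \<longleftrightarrow> evenperm \<alpha>"
      using assms(3) by (auto simp: evenperm_comp permutes_lessThan_permutation)
  next
    assume even: "evenperm \<phi> \<longleftrightarrow> evenperm \<alpha>"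
    have "\<phi> \<circ> inv \<alpha> permutes {..<h}"
      using assms(2,3) by (simp add: permutes_compose permutes_inv)
    moreover have "\<phi> = (\<phi> \<circ> inv \<alpha>) \<circ> \<alpha>"
      using permutes_inv_o(2)[OF assms(3)] by (simp add: comp_assoc)
    moreover have "evenperm (\<phi> \<circ> inv \<alpha>)"
      using even assms(2,3) permutes_lessThan_permutation[OF permutes_inv[OF assms(3)]]
      by (simp add: evenperm_comp evenperm_inv permutes_lessThan_permutation)
    ultimately show "\<exists>\<beta>. \<beta> permutes {..<h} \<and> evenperm \<beta> \<and> \<phi> = \<beta> \<circ> \<alpha>"
      by blast
  qed
  finally show ?thesis .
qed

lemma parity_SPF_act_even:
  assumes "p \<in> profiles h n" "\<phi> permutes {..<h}" "evenperm \<phi>"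
  shows "parity_SPF h (act h p (\<phi>, id)) = parity_SPF h p"
proof -
  let ?r = "orbit_repr h (Sh_id h) p" and ?q = "act h p (\<phi>, id)"
  have Ah: "is_subgroup h n (Ah_id h)" by (rule is_subgroup_Ah_id)
  have q_Ah: "?q \<in> orbit_U h p (Ah_id h)"
    using assms(2,3) by (auto simp: mem_orbit_U_Ah_id_iff)
  then have "?q \<in> orbit_U h p (Sh_id h)"
    using Ah_id_subset_Sh_id by (auto simp: orbit_U_def)
  then have "orbit_repr h (Sh_id h) ?q = ?r"
    by (rule orbit_repr_eq[OF is_subgroup_Sh_id assms(1)])
  moreover have "?q \<in> orbit_U h ?r (Ah_id h) \<longleftrightarrow> p \<in> orbit_U h ?r (Ah_id h)"
  proof
    assume "?q \<in> orbit_U h ?r (Ah_id h)"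
    then show "p \<in> orbit_U h ?r (Ah_id h)"
      using orbit_U_subset_of_mem[OF Ah] mem_orbit_U_sym[OF Ah assms(1) q_Ah] by blast
  next
    assume "p \<in> orbit_U h ?r (Ah_id h)"
    then show "?q \<in> orbit_U h ?r (Ah_id h)"
      using orbit_U_subset_of_mem[OF Ah] q_Ah by blast
  qed
  ultimately show ?thesis
    by (simp add: parity_SPF_def)
qed

lemma parity_SPF_act_odd:
  assumes "p \<in> profiles h n" "inj_on p {..<h}" "\<phi> permutes {..<h}" "\<not> evenperm \<phi>"
  shows "parity_SPF h (act h p (\<phi>, id)) \<noteq> parity_SPF h p"
proof -
  let ?r = "orbit_repr h (Sh_id h) p" and ?q = "act h p (\<phi>, id)"
  obtain \<rho> where \<rho>: "\<rho> permutes {..<h}" "?r = act h p (\<rho>, id)"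
    using orbit_repr_mem[OF is_subgroup_Sh_id assms(1)] by (auto simp: orbit_U_def Sh_id_def)
  have "?q \<in> orbit_U h p (Sh_id h)"
    using assms(3) by (auto simp: orbit_U_def)
  then have repr_q: "orbit_repr h (Sh_id h) ?q = ?r"
    by (rule orbit_repr_eq[OF is_subgroup_Sh_id assms(1)])
  have "p \<in> orbit_U h ?r (Ah_id h) \<longleftrightarrow> evenperm \<rho>"
    using act_mem_orbit_Ah_id_iff[OF assms(2) permutes_id \<rho>(1)] \<rho>(2) act_id_id[OF assms(1)]
    by simp
  moreover have "?q \<in> orbit_U h ?r (Ah_id h) \<longleftrightarrow> \<not> evenperm \<rho>"
    using act_mem_orbit_Ah_id_iff[OF assms(2,3) \<rho>(1)] \<rho>(2) assms(4) by simp
  moreover have "transpose 0 1 \<noteq> (id :: nat \<Rightarrow> nat)"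
    by (simp add: transpose_eq_id_iff)
  ultimately show ?thesis
    by (auto simp: parity_SPF_def repr_q)
qed

lemma G1F_parity_SPF:
  assumes "h \<le> fact n"
  shows "G1F h n (parity_SPF h) = Ah_id h"
proof
  show "Ah_id h \<subseteq> G1F h n (parity_SPF h)"
  proof
    fix g assume "g \<in> Ah_id h"
    then obtain \<phi> where g: "g = (\<phi>, id)" "\<phi> permutes {..<h}" "evenperm \<phi>"
      unfolding Ah_id_def by blast
    then show "g \<in> G1F h n (parity_SPF h)"
      by (simp add: G1F_def GF_def parity_SPF_act_even)
  qed
  show "G1F h n (parity_SPF h) \<subseteq> Ah_id h"
  proof
    fix g assume g: "g \<in> G1F h n (parity_SPF h)"
    then obtain \<phi> where \<phi>: "g = (\<phi>, id)" "\<phi> permutes {..<h}"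
      unfolding G1F_def Sh_id_def by blast
    obtain p where p: "p \<in> profiles h n" "inj_on p {..<h}"
      using ex_inj_profile_iff assms by blast
    have "parity_SPF h (act h p (\<phi>, id)) = parity_SPF h p"
      using g \<phi>(1) p(1) by (simp add: G1F_def GF_def)
    then have "evenperm \<phi>"
      using parity_SPF_act_odd[OF p \<phi>(2)] by blast
    then show "g \<in> Ah_id h"
      using \<phi> by simp
  qed
qed

lemma anonymity_group_Ah_id:
  assumes "2 \<le> n" "h \<le> fact n"
  shows "anonymity_group h n (Ah_id h)"
proof -
  have "transpose 0 1 permutes {..<n}"
    using assms(1) by (simp add: permutes_swap_id)
  then have "is_SPF h n (parity_SPF h)"
    by (simp add: is_SPF_def parity_SPF_def)
  then show ?thesis
    unfolding anonymity_group_def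
    using Ah_id_subset_Sh_id is_subgroup_Ah_id G1F_parity_SPF[OF assms(2)] by auto
qed

theorem mainTheorem18:
  fixes h n :: nat
  assumes "h \<ge> 2" and "n \<ge> 2"
  shows "(h \<le> fact n \<longrightarrow> Ogrp h n (Ah_id h) = Ah_id h)
       \<and> (h > fact n \<longrightarrow> Ogrp h n (Ah_id h) = Sh_id h)
       \<and> (anonymity_group h n (Ah_id h) \<longleftrightarrow> h \<le> fact n)"
proof -
  have "0 < h" using assms(1) by simp
  have small: "Ogrp h n (Ah_id h) = Ah_id h" if "h \<le> fact n"
    using Ogrp_eq_self_if_le_fact[OF \<open>0 < h\<close> that is_subgroup_Ah_id Ah_id_subset_Sh_id] .
  have large: "Ogrp h n (Ah_id h) = Sh_id h" if "fact n < h"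
    using Ogrp_Ah_id_if_gt_fact[OF \<open>0 < h\<close> that] .
  have "h \<le> fact n" if "anonymity_group h n (Ah_id h)"
  proof (rule ccontr)
    assume "\<not> h \<le> fact n"
    then have "Ah_id h = Sh_id h"
      using Ogrp_anonymity_group[OF \<open>0 < h\<close> that] large by simp
    then show False
      using Ah_id_neq_Sh_id assms(1) by blast
  qed
  then show ?thesis
    using small large anonymity_group_Ah_id[OF assms(2)] by auto
qed

end
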